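(* Let $|\cdot|$ denote the Euclidean norm on $\mathbb{R}^n$ and $\langle\cdot,\cdot\rangle$ the Euclidean inner product. Let $l_0,l_1,\bar l_0,\bar l_1\in\mathbb{R}^n$ satisfy the two sticks condition $$|l_1-\bar l_0|\ge |l_1-l_0|\quad\text{and}\quad |\bar l_1-l_0|\ge |\bar l_1-\bar l_0|.$$ Then $$\langle l_1-\bar l_1,\ l_0-\bar l_0\rangle\ge 0.$$ Consequently, for every $0\le t\le 1$, writing $l_t=(1-t)l_0+tl_1$ and $\bar l_t=(1-t)\bar l_0+t\bar l_1$, $$(1-t)^2|l_0-\bar l_0|^2+t^2|l_1-\bar l_1|^2\le |l_t-\bar l_t|^2.$$
   Context: The points $l_0,l_1$ are the initial and terminal points of the directed segment ("stick") $[l_0,l_1]$, and similarly for $[\bar l_0,\bar l_1]$; the sticks need not have equal length. *)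

theory Defs
  imports "HOL-Analysis.Analysis"
begin

end

theory Submission
  imports Defs
begin

text \<open>Expanding inner products gives
  2\<langle>l1 - lb1, l0 - lb0\<rangle> = |l1 - lb0|^2 + |lb1 - l0|^2 - |l1 - l0|^2 - |lb1 - lb0|^2,
  which the two sticks condition makes nonnegative. Along the interpolation,
  l_t - lb_t = (1 - t)(l0 - lb0) + t(l1 - lb1), whose squared norm exceeds
  (1 - t)^2|l0 - lb0|^2 + t^2|l1 - lb1|^2 by the cross term 2t(1 - t) times that inner product.\<close>

lemma inner_diff_diff_eq_norms:
  fixes a b c d :: "'a::real_inner"
  shows "2 * inner (a - b) (c - d)
    = (norm (a - d))\<^sup>2 + (norm (b - c))\<^sup>2 - (norm (a - c))\<^sup>2 - (norm (b - d))\<^sup>2"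
  by (simp add: power2_norm_eq_inner inner_diff_left inner_diff_right inner_commute algebra_simps)

lemma two_sticks_inner_nonneg:
  fixes l0 l1 lb0 lb1 :: "'a::real_inner"
  assumes "norm (l1 - l0) \<le> norm (l1 - lb0)" and "norm (lb1 - lb0) \<le> norm (lb1 - l0)"
  shows "0 \<le> inner (l1 - lb1) (l0 - lb0)"
proof -
  have "(norm (l1 - l0))\<^sup>2 \<le> (norm (l1 - lb0))\<^sup>2" "(norm (lb1 - lb0))\<^sup>2 \<le> (norm (lb1 - l0))\<^sup>2"
    using assms by (simp_all add: power_mono)
  with inner_diff_diff_eq_norms[of l1 lb1 l0 lb0] show ?thesis by linarith
qed

lemma norm_convex_comb_sq:
  fixes u v :: "'a::real_inner"
  shows "(norm ((1 - t) *\<^sub>R u + t *\<^sub>R v))\<^sup>2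
    = (1 - t)\<^sup>2 * (norm u)\<^sup>2 + t\<^sup>2 * (norm v)\<^sup>2 + 2 * t * (1 - t) * inner u v"
  unfolding power2_norm_eq_inner
  by (simp add: inner_add_left inner_add_right inner_commute algebra_simps power2_eq_square)

lemma norm_convex_comb_sq_ge:
  fixes u v :: "'a::real_inner"
  assumes "0 \<le> inner u v" and "0 \<le> t" and "t \<le> 1"
  shows "(1 - t)\<^sup>2 * (norm u)\<^sup>2 + t\<^sup>2 * (norm v)\<^sup>2 \<le> (norm ((1 - t) *\<^sub>R u + t *\<^sub>R v))\<^sup>2"
  using assms by (simp add: norm_convex_comb_sq)

theorem proposition3p1:
  fixes l0 l1 lb0 lb1 :: "real ^ 'n"
  assumes "norm (l1 - lb0) \<ge> norm (l1 - l0)"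
      and "norm (lb1 - l0) \<ge> norm (lb1 - lb0)"
  shows "inner (l1 - lb1) (l0 - lb0) \<ge> 0 \<and>
         (\<forall>t::real. 0 \<le> t \<and> t \<le> 1 \<longrightarrow>
            (1 - t)^2 * (norm (l0 - lb0))^2 + t^2 * (norm (l1 - lb1))^2
              \<le> (norm (((1 - t) *\<^sub>R l0 + t *\<^sub>R l1) - ((1 - t) *\<^sub>R lb0 + t *\<^sub>R lb1)))^2)"
proof -
  have inner_nonneg: "0 \<le> inner (l1 - lb1) (l0 - lb0)"
    using two_sticks_inner_nonneg assms by blast
  have "(1 - t)^2 * (norm (l0 - lb0))^2 + t^2 * (norm (l1 - lb1))^2
          \<le> (norm (((1 - t) *\<^sub>R l0 + t *\<^sub>R l1) - ((1 - t) *\<^sub>R lb0 + t *\<^sub>R lb1)))^2"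
    if "0 \<le> t" "t \<le> 1" for t :: real
  proof -
    have "((1 - t) *\<^sub>R l0 + t *\<^sub>R l1) - ((1 - t) *\<^sub>R lb0 + t *\<^sub>R lb1)
        = (1 - t) *\<^sub>R (l0 - lb0) + t *\<^sub>R (l1 - lb1)"
      by (simp add: algebra_simps)
    then show ?thesis
      using norm_convex_comb_sq_ge[of "l0 - lb0" "l1 - lb1" t] inner_nonneg that
      by (simp add: inner_commute)
  qed
  with inner_nonneg show ?thesis by blast
qed

end
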